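(* Let $\delta\ge1$ be an integer and $v\in V_\delta$. If a coalition structure $C^*$ of $N$ maximizes the social welfare $\mathsf{SW}(\cdot\mid v)$, then $|S|\le\delta$ for every $S\in C^*$.
   Context: Players: a finite set $N$. A characteristic function is $v:2^N\to\mathbb{R}_{\ge 0}$ with $v(\emptyset)=0$. There are fixed constants $0<\mathsf{min}\le\mathsf{max}$ and $v$ is monotone and bounded: $\mathsf{min}\le v(S)\le v(T)\le\mathsf{max}$ for all nonempty $S\subseteq T\subseteq N$. $V_\delta$ is the set of such $v$ with $\delta\cdot\mathsf{min}\le\mathsf{max}<(\delta+1)\cdot\mathsf{min}$. A coalition structure is a partition $C$ of $N$, with social welfare $\mathsf{SW}(C\mid v)=\sum_{S\in C}v(S)$. *)

theory Defs
  imports Complex_Main "HOL-Library.Disjoint_Sets"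
begin

definition char_fun :: "'a set \<Rightarrow> ('a set \<Rightarrow> real) \<Rightarrow> bool" where
  "char_fun N v \<longleftrightarrow> v {} = 0 \<and> (\<forall>S. S \<subseteq> N \<longrightarrow> 0 \<le> v S)"

definition mono_bounded :: "real \<Rightarrow> real \<Rightarrow> 'a set \<Rightarrow> ('a set \<Rightarrow> real) \<Rightarrow> bool" where
  "mono_bounded mn mx N v \<longleftrightarrow> 0 < mn \<and> mn \<le> mx \<and>
     (\<forall>S T. S \<noteq> {} \<and> S \<subseteq> T \<and> T \<subseteq> N \<longrightarrow> mn \<le> v S \<and> v S \<le> v T \<and> v T \<le> mx)"

definition V_delta :: "nat \<Rightarrow> real \<Rightarrow> real \<Rightarrow> 'a set \<Rightarrow> ('a set \<Rightarrow> real) set" where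
  "V_delta \<delta> mn mx N = {v. char_fun N v \<and> mono_bounded mn mx N v \<and>
      real \<delta> * mn \<le> mx \<and> mx < (real \<delta> + 1) * mn}"

definition coalition_structure :: "'a set \<Rightarrow> 'a set set \<Rightarrow> bool" where
  "coalition_structure N C \<longleftrightarrow> partition_on N C"

definition SW :: "'a set set \<Rightarrow> ('a set \<Rightarrow> real) \<Rightarrow> real" where
  "SW C v = (\<Sum>S\<in>C. v S)"

end

theory Submission
  imports Defs
begin

text \<open>A block S of a welfare-maximising structure can always be replaced by its singletons, so
  v S is at least the sum of the singleton values, which is at least card S * mn. Since
  v S \<le> mx < (\<delta> + 1) * mn, this forces card S \<le> \<delta>.\<close>

lemma partition_on_Un:
  assumes "partition_on A P" "partition_on B Q" "A \<inter> B = {}"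
  shows "partition_on (A \<union> B) (P \<union> Q)"
  using assms disjoint_union[of P Q] by (auto simp: partition_on_def)

lemma partition_on_disjoint_blocks:
  assumes "partition_on A P" "partition_on B Q" "A \<inter> B = {}"
  shows "P \<inter> Q = {}"
proof -
  have "p = {}" if "p \<in> P" "p \<in> Q" for p
    using assms that partition_onD1[OF assms(1)] partition_onD1[OF assms(2)] by blast
  then show ?thesis
    using partition_onD3[OF assms(1)] by blast
qed

lemma partition_on_Diff_block:
  assumes "partition_on A P" "S \<in> P"
  shows "partition_on (A - S) (P - {S})"
proof -
  have "disjnt S (\<Union>(P - {S}))"
    using partition_onD2[OF assms(1)] assms(2) by (auto simp: disjnt_def disjoint_def)
  moreover have "insert S (P - {S}) = P"
    using assms(2) by blast
  ultimately show ?thesis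
    using partition_on_insert[of S "P - {S}" A] assms(1) by simp
qed

lemma partition_on_refine_block:
  assumes "partition_on A P" "S \<in> P" "partition_on S Q"
  shows "partition_on A ((P - {S}) \<union> Q)"
    and "(P - {S}) \<inter> Q = {}"
proof -
  have "S \<subseteq> A"
    using assms(1,2) by (auto simp: partition_on_def)
  then have "(A - S) \<union> S = A"
    by blast
  then show "partition_on A ((P - {S}) \<union> Q)"
    using partition_on_Un[OF partition_on_Diff_block[OF assms(1,2)] assms(3)] by auto
  show "(P - {S}) \<inter> Q = {}"
    using partition_on_disjoint_blocks[OF partition_on_Diff_block[OF assms(1,2)] assms(3)] by blast
qed

lemma SW_refine_block:
  assumes "finite P" "S \<in> P" "finite Q" "(P - {S}) \<inter> Q = {}"
  shows "SW ((P - {S}) \<union> Q) v = SW P v - v S + SW Q v"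
  using assms by (simp add: SW_def sum.union_disjoint sum.remove)

lemma SW_singletons: "SW ((\<lambda>x. {x}) ` S) v = (\<Sum>x\<in>S. v {x})"
  by (simp add: SW_def sum.reindex)

lemma SW_partition_of_optimal_block_le:
  assumes "finite N" "partition_on N C" "S \<in> C"
    and optimal: "\<forall>C'. partition_on N C' \<longrightarrow> SW C' v \<le> SW C v"
    and Q: "partition_on S Q"
  shows "SW Q v \<le> v S"
proof -
  have "finite Q"
    using finite_elements[OF _ Q] finite_subset[OF _ \<open>finite N\<close>] assms(2,3)
    by (auto simp: partition_on_def)
  have "SW ((C - {S}) \<union> Q) v \<le> SW C v"
    using optimal partition_on_refine_block(1)[OF assms(2,3) Q] by blast
  moreover have "SW ((C - {S}) \<union> Q) v = SW C v - v S + SW Q v"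
    using SW_refine_block[OF finite_elements[OF assms(1,2)] assms(3) \<open>finite Q\<close>]
      partition_on_refine_block(2)[OF assms(2,3) Q] by blast
  ultimately show ?thesis
    by linarith
qed

lemma card_mult_le_SW_singletons:
  assumes "mono_bounded mn mx N v" "S \<subseteq> N"
  shows "real (card S) * mn \<le> SW ((\<lambda>x. {x}) ` S) v"
proof -
  have "mn \<le> v {x}" if "x \<in> S" for x
    using assms that unfolding mono_bounded_def by blast
  then have "(\<Sum>x\<in>S. mn) \<le> (\<Sum>x\<in>S. v {x})"
    by (rule sum_mono)
  then show ?thesis
    by (simp add: SW_singletons)
qed

theorem lemma1:
  fixes N :: "'a set" and v :: "'a set \<Rightarrow> real" and \<delta> :: nat
    and mn mx :: real and Cstar :: "'a set set"
  assumes "finite N"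
    and "\<delta> \<ge> 1"
    and "v \<in> V_delta \<delta> mn mx N"
    and "coalition_structure N Cstar"
    and "\<forall>C. coalition_structure N C \<longrightarrow> SW C v \<le> SW Cstar v"
  shows "\<forall>S\<in>Cstar. card S \<le> \<delta>"
proof (intro ballI leI notI)
  fix S
  assume S: "S \<in> Cstar" and large: "\<delta> < card S"
  have P: "partition_on N Cstar"
    using assms(4) by (simp add: coalition_structure_def)
  have SN: "S \<subseteq> N" and "S \<noteq> {}"
    using P S by (auto simp: partition_on_def)
  have mb: "mono_bounded mn mx N v" and hi: "mx < (real \<delta> + 1) * mn"
    using assms(3) by (auto simp: V_delta_def)
  have "(real \<delta> + 1) * mn \<le> real (card S) * mn"
    using large mb by (intro mult_right_mono) (auto simp: mono_bounded_def)
  also have "\<dots> \<le> SW ((\<lambda>x. {x}) ` S) v"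
    using card_mult_le_SW_singletons[OF mb SN] .
  also have "\<dots> \<le> v S"
    using SW_partition_of_optimal_block_le[OF assms(1) P S _ partition_on_singletons] assms(5)
    by (simp add: coalition_structure_def)
  also have "\<dots> \<le> mx"
    using mb SN \<open>S \<noteq> {}\<close> unfolding mono_bounded_def by blast
  finally show False
    using hi by linarith
qed

end
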